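(* Let $m\ge 2$ be even, $n\ge 1$, and let $\mathcal{T}=(t_{i_1 i_2\cdots i_m})\in\mathbb{R}^{[m,n]}$ be a Nekrasov $Z$ tensor all of whose diagonal elements $t_{i i\cdots i}$ ($i\in[n]$) are positive. Then $\mathcal{T}$ is a $P$-tensor, i.e. for every $x\in\mathbb{R}^n\setminus\{0\}$ there exists $j\in[n]$ with $x_j\neq 0$ and $x_j(\mathcal{T}x^{m-1})_j>0$.
   Context: $[n]=\{1,\dots,n\}$ and $\mathbb{R}^{[m,n]}$ denotes the set of real tensors $\mathcal{T}=(t_{i_1\cdots i_m})$ with $i_1,\dots,i_m\in[n]$ (order $m$, dimension $n$). For $x\in\mathbb{R}^n$, $(\mathcal{T}x^{m-1})_i=\sum_{i_2,\dots,i_m=1}^n t_{i i_2\cdots i_m}x_{i_2}\cdots x_{i_m}$. A diagonal element is $t_{i\cdots i}$; all other entries are off-diagonal. $\mathcal{T}$ is a $Z$ tensor if all its off-diagonal entries are nonpositive. For $\mathcal{T}$ with $t_{i\cdots i}\neq 0$ for all $i$, define $R_i(\mathcal{T})=\sum_{(i_2,\dots,i_m)\neq(i,\dots,i)}|t_{i i_2\cdots i_m}|$, $\Lambda_1(\mathcal{T})=R_1(\mathcal{T})$, and for $i=2,\dots,n$ $$\Lambda_i(\mathcal{T})=\sum_{(i_2,\dots,i_m)\in[i-1]^{m-1}}|t_{i i_2\cdots i_m}|\Big(\tfrac{\Lambda_{i_2}(\mathcal{T})}{|t_{i_2\cdots i_2}|}\Big)^{\frac{1}{m-1}}\cdots\Big(\tfrac{\Lambda_{i_m}(\mathcal{T})}{|t_{i_m\cdots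 i_m}|}\Big)^{\frac{1}{m-1}}+\sum_{(i_2,\dots,i_m)\notin[i-1]^{m-1},\ (i_2,\dots,i_m)\neq(i,\dots,i)}|t_{i i_2\cdots i_m}|.$$ $\mathcal{T}$ is a Nekrasov tensor if $|t_{i\cdots i}|>\Lambda_i(\mathcal{T})$ for all $i\in[n]$. A Nekrasov $Z$ tensor is a tensor that is both a Nekrasov tensor and a $Z$ tensor. *)

theory Defs
  imports Main "HOL-Analysis.Analysis"
begin

text \<open>A real tensor of order m and dimension n is modelled as a function
  T :: nat list => real; the entry t_{i_1...i_m} is T [i_1,...,i_m], with
  indices in {1..n}. Values of T on other lists are irrelevant.\<close>

definition tuples :: "nat \<Rightarrow> nat \<Rightarrow> nat list set" where
  "tuples k n = {js. length js = k \<and> set js \<subseteq> {1..n}}"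

definition tensor_apply :: "(nat list \<Rightarrow> real) \<Rightarrow> nat \<Rightarrow> nat \<Rightarrow> (nat \<Rightarrow> real) \<Rightarrow> nat \<Rightarrow> real" where
  "tensor_apply T m n x i = (\<Sum>js\<in>tuples (m - 1) n. T (i # js) * prod_list (map x js))"

definition diag :: "(nat list \<Rightarrow> real) \<Rightarrow> nat \<Rightarrow> nat \<Rightarrow> real" where
  "diag T m i = T (replicate m i)"

definition is_Z_tensor :: "(nat list \<Rightarrow> real) \<Rightarrow> nat \<Rightarrow> nat \<Rightarrow> bool" where
  "is_Z_tensor T m n \<longleftrightarrow>
     (\<forall>is\<in>tuples m n. (\<forall>i. is \<noteq> replicate m i) \<longrightarrow> T is \<le> 0)"

definition R_row :: "(nat list \<Rightarrow> real) \<Rightarrow> nat \<Rightarrow> nat \<Rightarrow> nat \<Rightarrow> real" where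
  "R_row T m n i = (\<Sum>js\<in>tuples (m - 1) n - {replicate (m - 1) i}. \<bar>T (i # js)\<bar>)"

primrec Lambda_list :: "(nat list \<Rightarrow> real) \<Rightarrow> nat \<Rightarrow> nat \<Rightarrow> nat \<Rightarrow> real list" where
  "Lambda_list T m n 0 = []"
| "Lambda_list T m n (Suc k) =
     (let L = Lambda_list T m n k; i = Suc k in
      L @ [if i = 1 then R_row T m n 1 else
        (\<Sum>js\<in>tuples (m - 1) (i - 1).
            \<bar>T (i # js)\<bar> *
            prod_list (map (\<lambda>j. (L ! (j - 1) / \<bar>diag T m j\<bar>) powr (1 / real (m - 1))) js))
        + (\<Sum>js\<in>tuples (m - 1) n - tuples (m - 1) (i - 1) - {replicate (m - 1) i}.
            \<bar>T (i # js)\<bar>)])"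

definition Lambda :: "(nat list \<Rightarrow> real) \<Rightarrow> nat \<Rightarrow> nat \<Rightarrow> nat \<Rightarrow> real" where
  "Lambda T m n i = Lambda_list T m n i ! (i - 1)"

definition is_Nekrasov :: "(nat list \<Rightarrow> real) \<Rightarrow> nat \<Rightarrow> nat \<Rightarrow> bool" where
  "is_Nekrasov T m n \<longleftrightarrow>
     (\<forall>i\<in>{1..n}. diag T m i \<noteq> 0) \<and> (\<forall>i\<in>{1..n}. \<bar>diag T m i\<bar> > Lambda T m n i)"

definition is_P_tensor :: "(nat list \<Rightarrow> real) \<Rightarrow> nat \<Rightarrow> nat \<Rightarrow> bool" where
  "is_P_tensor T m n \<longleftrightarrow>
     (\<forall>x :: nat \<Rightarrow> real. (\<exists>i\<in>{1..n}. x i \<noteq> 0) \<longrightarrow>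
        (\<exists>j\<in>{1..n}. x j \<noteq> 0 \<and> x j * tensor_apply T m n x j > 0))"

end

theory Submission
  imports Defs
begin

text \<open>Suppose \<open>x \<noteq> 0\<close> but \<open>x_i (T x^(m-1))_i \<le> 0\<close> for every \<open>i\<close>, and let
  \<open>M = max_k \<bar>x_k\<bar> > 0\<close>. As \<open>m\<close> is even, \<open>x_i^m = \<bar>x_i\<bar>^m\<close>, so in row \<open>i\<close> the
  diagonal term is dominated by the off-diagonal ones:
  \<open>\<bar>x_i\<bar>^(m-1) t_i \<le> \<Sum> \<bar>t_(i i_2 ... i_m)\<bar> \<bar>x_(i_2)\<bar> ... \<bar>x_(i_m)\<bar>\<close>, where \<open>t_i\<close> is the
  \<open>i\<close>-th diagonal entry. Strong induction on \<open>i\<close> turns this into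
  \<open>\<bar>x_i\<bar>^(m-1) t_i \<le> \<Lambda>_i M^(m-1)\<close>: for \<open>k < i\<close> the induction hypothesis gives
  \<open>\<bar>x_k\<bar> \<le> (\<Lambda>_k / t_k)^(1/(m-1)) M\<close>, every other \<open>\<bar>x_k\<bar>\<close> is at most \<open>M\<close>, and with
  these bounds the right-hand side is exactly the recursion defining \<open>\<Lambda>_i\<close>. At an
  index with \<open>\<bar>x_i\<bar> = M\<close> this contradicts \<open>\<Lambda>_i < t_i\<close>.\<close>

lemma finite_tuples: "finite (tuples k n)"
proof -
  have "tuples k n = {xs. set xs \<subseteq> {1..n} \<and> length xs = k}" by (auto simp: tuples_def)
  then show ?thesis using finite_lists_length_eq[of "{1..n}" k] by simp
qed

lemma tuples_0: "k \<ge> 1 \<Longrightarrow> tuples k 0 = {}"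
  by (auto simp: tuples_def)

lemma length_Lambda_list: "length (Lambda_list T m n k) = k"
  by (induct k) (auto simp: Let_def)

lemma nth_Lambda_list: "1 \<le> j \<Longrightarrow> j \<le> k \<Longrightarrow> Lambda_list T m n k ! (j - 1) = Lambda T m n j"
proof (induct k)
  case (Suc k)
  then show ?case
    by (cases "j = Suc k") (auto simp: Lambda_def Let_def nth_append length_Lambda_list)
qed simp

definition Nekrasov_weight :: "(nat list \<Rightarrow> real) \<Rightarrow> nat \<Rightarrow> nat \<Rightarrow> nat \<Rightarrow> real" where
  "Nekrasov_weight T m n j = (Lambda T m n j / \<bar>diag T m j\<bar>) powr (1 / real (m - 1))"

lemma Lambda_rec:
  assumes "m \<ge> 2" "1 \<le> i"
  shows "Lambda T m n i =
    (\<Sum>js\<in>tuples (m - 1) (i - 1). \<bar>T (i # js)\<bar> * prod_list (map (Nekrasov_weight T m n) js))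
    + (\<Sum>js\<in>tuples (m - 1) n - tuples (m - 1) (i - 1) - {replicate (m - 1) i}. \<bar>T (i # js)\<bar>)"
proof (cases "i = 1")
  case True
  then show ?thesis using assms tuples_0[of "m - 1"] by (simp add: Lambda_def R_row_def)
next
  case False
  then obtain k where k: "i = Suc k" "k \<ge> 1" using assms by (cases i) auto
  have "prod_list (map (\<lambda>j. (Lambda_list T m n k ! (j - 1) / \<bar>diag T m j\<bar>) powr (1 / real (m - 1))) js)
      = prod_list (map (Nekrasov_weight T m n) js)" if "js \<in> tuples (m - 1) (i - 1)" for js
  proof -
    have "Lambda_list T m n k ! (j - 1) = Lambda T m n j" if "j \<in> set js" for j
      using \<open>js \<in> tuples (m - 1) (i - 1)\<close> that k by (intro nth_Lambda_list) (auto simp: tuples_def)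
    then show ?thesis by (simp add: Nekrasov_weight_def cong: map_cong)
  qed
  then have "(\<Sum>js\<in>tuples (m - 1) (i - 1). \<bar>T (i # js)\<bar> *
      prod_list (map (\<lambda>j. (Lambda_list T m n k ! (j - 1) / \<bar>diag T m j\<bar>) powr (1 / real (m - 1))) js))
    = (\<Sum>js\<in>tuples (m - 1) (i - 1). \<bar>T (i # js)\<bar> * prod_list (map (Nekrasov_weight T m n) js))"
    by (intro sum.cong) simp_all
  then show ?thesis using k by (simp add: Lambda_def Let_def nth_append length_Lambda_list)
qed

lemma Lambda_nonneg: "m \<ge> 2 \<Longrightarrow> 1 \<le> i \<Longrightarrow> 0 \<le> Lambda T m n i"
  by (subst Lambda_rec)
    (auto intro!: add_nonneg_nonneg sum_nonneg mult_nonneg_nonneg prod_list_nonneg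
      simp: Nekrasov_weight_def)

lemma tensor_apply_eq_diag_plus_off_diag:
  assumes "m \<ge> 1" "i \<in> {1..n}"
  shows "tensor_apply T m n x i = diag T m i * x i ^ (m - 1)
    + (\<Sum>js\<in>tuples (m - 1) n - {replicate (m - 1) i}. T (i # js) * prod_list (map x js))"
proof -
  let ?r = "replicate (m - 1) i"
  have "?r \<in> tuples (m - 1) n" using assms(2) by (auto simp: tuples_def)
  then have "tensor_apply T m n x i = T (i # ?r) * prod_list (map x ?r)
      + (\<Sum>js\<in>tuples (m - 1) n - {?r}. T (i # js) * prod_list (map x js))"
    unfolding tensor_apply_def by (rule sum.remove[OF finite_tuples])
  moreover have "replicate m i = i # ?r" using assms(1) by (cases m) auto
  ultimately show ?thesis by (simp add: diag_def)
qed

lemma abs_prod_list_map: "\<bar>prod_list (map f xs)\<bar> = prod_list (map (\<lambda>k. \<bar>f k\<bar>) xs)"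
  for f :: "'a \<Rightarrow> 'b::linordered_idom"
  by (induct xs) (auto simp: abs_mult)

lemma prod_list_map_mono:
  fixes f g :: "'a \<Rightarrow> 'b::linordered_semidom"
  assumes "\<And>k. k \<in> set xs \<Longrightarrow> 0 \<le> f k \<and> f k \<le> g k"
  shows "prod_list (map f xs) \<le> prod_list (map g xs)"
  using assms
proof (induct xs)
  case (Cons a xs)
  then show ?case by (auto intro!: mult_mono prod_list_nonneg order_trans[of 0 "f a" "g a"])
qed simp

lemma prod_list_map_mult_const:
  "prod_list (map (\<lambda>k. f k * c) xs) = prod_list (map f xs) * c ^ length xs"
  for f :: "'a \<Rightarrow> 'b::comm_monoid_mult"
  by (induct xs) (auto simp: ac_simps)

lemma le_root_mult:
  fixes a b M :: real and p :: nat
  assumes "0 \<le> b" "0 \<le> M" "p > 0" and "a ^ p \<le> b * M ^ p"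
  shows "a \<le> b powr (1 / real p) * M"
proof -
  obtain q where p: "p = Suc q" using assms(3) by (cases p) auto
  have "(b powr (1 / real p)) ^ p = b"
    using assms(1,3) by (simp add: root_powr_inverse[symmetric] real_root_pow_pos2)
  then have "a ^ Suc q \<le> (b powr (1 / real p) * M) ^ Suc q"
    using assms(4) by (simp only: power_mult_distrib p[symmetric])
  then show ?thesis
    by (rule power_le_imp_le_base) (use assms(2) in simp)
qed

lemma diag_abs_power_le_off_diag:
  fixes x :: "nat \<Rightarrow> real"
  assumes "even m" "m \<ge> 2" "i \<in> {1..n}" and "x i * tensor_apply T m n x i \<le> 0"
  shows "\<bar>x i\<bar> ^ (m - 1) * diag T m i \<le>
    (\<Sum>js\<in>tuples (m - 1) n - {replicate (m - 1) i}. \<bar>T (i # js)\<bar> * prod_list (map (\<lambda>k. \<bar>x k\<bar>) js))"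
    (is "_ \<le> ?R")
proof -
  obtain k where m: "m = Suc k" using assms(2) by (cases m) auto
  define off where "off = (\<Sum>js\<in>tuples (m - 1) n - {replicate (m - 1) i}. T (i # js) * prod_list (map x js))"
  have off_le: "\<bar>off\<bar> \<le> ?R"
    unfolding off_def by (rule order_trans[OF sum_abs]) (simp add: abs_mult abs_prod_list_map)
  have sign: "x i * (diag T m i * x i ^ (m - 1) + off) \<le> 0"
    using assms(2-4) tensor_apply_eq_diag_plus_off_diag[of m i n T x] by (simp add: off_def)
  have "\<bar>x i\<bar> * (\<bar>x i\<bar> ^ (m - 1) * diag T m i) = diag T m i * \<bar>x i\<bar> ^ m"
    by (simp add: m)
  also have "\<dots> = diag T m i * x i ^ m" using assms(1) by (simp add: power_even_abs)
  also have "\<dots> = diag T m i * (x i * x i ^ (m - 1))" by (simp add: m)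
  also have "\<dots> \<le> - (x i * off)"
    using sign by (simp only: distrib_left mult.left_commute)
  also have "\<dots> \<le> \<bar>x i\<bar> * \<bar>off\<bar>" by (metis abs_ge_minus_self abs_mult)
  also have "\<dots> \<le> \<bar>x i\<bar> * ?R" using off_le by (simp add: mult_left_mono)
  finally have "\<bar>x i\<bar> * (\<bar>x i\<bar> ^ (m - 1) * diag T m i) \<le> \<bar>x i\<bar> * ?R" .
  moreover have "0 \<le> ?R" by (intro sum_nonneg mult_nonneg_nonneg prod_list_nonneg) auto
  ultimately show ?thesis using assms(2) by (cases "x i = 0") (auto simp: m power_0_left)
qed

lemma off_diag_sum_le_Lambda:
  fixes x :: "nat \<Rightarrow> real"
  assumes "m \<ge> 2" "i \<in> {1..n}" "0 \<le> M"
    and below: "\<And>k. k \<in> {1..i - 1} \<Longrightarrow> \<bar>x k\<bar> \<le> Nekrasov_weight T m n k * M"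
    and bounded: "\<And>k. k \<in> {1..n} \<Longrightarrow> \<bar>x k\<bar> \<le> M"
  shows "(\<Sum>js\<in>tuples (m - 1) n - {replicate (m - 1) i}. \<bar>T (i # js)\<bar> * prod_list (map (\<lambda>k. \<bar>x k\<bar>) js))
    \<le> Lambda T m n i * M ^ (m - 1)"
proof -
  let ?f = "\<lambda>js. \<bar>T (i # js)\<bar> * prod_list (map (\<lambda>k. \<bar>x k\<bar>) js)"
  define A where "A = tuples (m - 1) (i - 1)"
  define B where "B = tuples (m - 1) n - A - {replicate (m - 1) i}"
  have "A \<subseteq> tuples (m - 1) n" "replicate (m - 1) i \<notin> A"
    using assms(1,2) by (fastforce simp: A_def tuples_def)+
  then have split: "tuples (m - 1) n - {replicate (m - 1) i} = A \<union> B" by (auto simp: B_def)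
  have sum_A: "sum ?f A \<le> (\<Sum>js\<in>A. \<bar>T (i # js)\<bar> * prod_list (map (Nekrasov_weight T m n) js)) * M ^ (m - 1)"
    unfolding sum_distrib_right mult.assoc
  proof (intro sum_mono mult_left_mono)
    fix js assume "js \<in> A"
    then have "set js \<subseteq> {1..i - 1}" "length js = m - 1" by (auto simp: A_def tuples_def)
    then have "\<forall>k\<in>set js. \<bar>x k\<bar> \<le> Nekrasov_weight T m n k * M" using below by blast
    then have "prod_list (map (\<lambda>k. \<bar>x k\<bar>) js) \<le> prod_list (map (\<lambda>k. Nekrasov_weight T m n k * M) js)"
      by (intro prod_list_map_mono) auto
    then show "prod_list (map (\<lambda>k. \<bar>x k\<bar>) js) \<le> prod_list (map (Nekrasov_weight T m n) js) * M ^ (m - 1)"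
      using \<open>length js = m - 1\<close> by (simp add: prod_list_map_mult_const)
  qed simp
  have sum_B: "sum ?f B \<le> (\<Sum>js\<in>B. \<bar>T (i # js)\<bar>) * M ^ (m - 1)"
    unfolding sum_distrib_right
  proof (intro sum_mono mult_left_mono)
    fix js assume "js \<in> B"
    then have "set js \<subseteq> {1..n}" "length js = m - 1" by (auto simp: B_def tuples_def)
    then have "\<forall>k\<in>set js. \<bar>x k\<bar> \<le> M" using bounded by blast
    then have "prod_list (map (\<lambda>k. \<bar>x k\<bar>) js) \<le> prod_list (map (\<lambda>_. M) js)"
      by (intro prod_list_map_mono) auto
    then show "prod_list (map (\<lambda>k. \<bar>x k\<bar>) js) \<le> M ^ (m - 1)"
      using \<open>length js = m - 1\<close> by (simp add: map_replicate_const)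
  qed simp
  have "sum ?f (tuples (m - 1) n - {replicate (m - 1) i}) = sum ?f A + sum ?f B"
    unfolding split by (rule sum.union_disjoint) (auto simp: A_def B_def finite_tuples)
  also have "\<dots> \<le> Lambda T m n i * M ^ (m - 1)"
    using sum_A sum_B Lambda_rec[OF assms(1), of i T n] assms(2)
    by (simp add: A_def B_def distrib_right)
  finally show ?thesis .
qed

lemma diag_abs_power_le_Lambda:
  fixes x :: "nat \<Rightarrow> real"
  assumes "even m" "m \<ge> 2" and diag_pos: "\<forall>j\<in>{1..n}. diag T m j > 0"
    and sign: "\<forall>j\<in>{1..n}. x j * tensor_apply T m n x j \<le> 0"
    and bounded: "\<forall>j\<in>{1..n}. \<bar>x j\<bar> \<le> M"
  shows "i \<in> {1..n} \<Longrightarrow> \<bar>x i\<bar> ^ (m - 1) * diag T m i \<le> Lambda T m n i * M ^ (m - 1)"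
proof (induct i rule: less_induct)
  case (less i)
  have "0 \<le> M" using bounded less.prems by (meson abs_ge_zero order_trans)
  have "\<bar>x k\<bar> \<le> Nekrasov_weight T m n k * M" if "k \<in> {1..i - 1}" for k
  proof -
    have k: "k < i" "k \<in> {1..n}" using that less.prems by auto
    then have "\<bar>x k\<bar> ^ (m - 1) * diag T m k \<le> Lambda T m n k * M ^ (m - 1)" by (rule less.hyps)
    moreover have "diag T m k > 0" using diag_pos k(2) by blast
    ultimately have "\<bar>x k\<bar> ^ (m - 1) \<le> Lambda T m n k / \<bar>diag T m k\<bar> * M ^ (m - 1)"
      by (simp add: pos_le_divide_eq)
    then show ?thesis unfolding Nekrasov_weight_def
      using assms(2) \<open>0 \<le> M\<close> Lambda_nonneg[OF assms(2), of k T n] k(2) by (intro le_root_mult) auto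
  qed
  then show ?case
    using diag_abs_power_le_off_diag[OF assms(1,2) less.prems] sign less.prems
      off_diag_sum_le_Lambda[OF assms(2) less.prems \<open>0 \<le> M\<close>, of x T] bounded
    by fastforce
qed

lemma Nekrasov_sign_nonpos_imp_zero:
  fixes x :: "nat \<Rightarrow> real"
  assumes "even m" "m \<ge> 2" "is_Nekrasov T m n" and diag_pos: "\<forall>j\<in>{1..n}. diag T m j > 0"
    and sign: "\<forall>j\<in>{1..n}. x j * tensor_apply T m n x j \<le> 0" and "i \<in> {1..n}"
  shows "x i = 0"
proof -
  define M where "M = Max ((\<lambda>j. \<bar>x j\<bar>) ` {1..n})"
  have bounded: "\<forall>j\<in>{1..n}. \<bar>x j\<bar> \<le> M" by (auto simp: M_def)
  obtain j where j: "j \<in> {1..n}" "\<bar>x j\<bar> = M"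
    using Max_in[of "(\<lambda>j. \<bar>x j\<bar>) ` {1..n}"] assms(6) unfolding M_def by fastforce
  have le_Lambda: "M ^ (m - 1) * diag T m j \<le> Lambda T m n j * M ^ (m - 1)"
    using diag_abs_power_le_Lambda[OF assms(1,2) diag_pos sign bounded j(1)] j(2) by simp
  have Lambda_less: "Lambda T m n j < diag T m j"
    using assms(3) diag_pos j(1) by (force simp: is_Nekrasov_def)
  have "M \<le> 0"
  proof (rule ccontr)
    assume "\<not> M \<le> 0"
    then have "Lambda T m n j * M ^ (m - 1) < M ^ (m - 1) * diag T m j"
      using Lambda_less by simp
    with le_Lambda show False by simp
  qed
  then show ?thesis using bounded assms(6) by force
qed

theorem mainTheorem1:
  fixes T :: "nat list \<Rightarrow> real" and m n :: nat
  assumes "even m" and "m \<ge> 2" and "n \<ge> 1"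
    and "is_Nekrasov T m n" and "is_Z_tensor T m n"
    and "\<forall>i\<in>{1..n}. diag T m i > 0"
  shows "is_P_tensor T m n"
  unfolding is_P_tensor_def
proof (intro allI impI)
  fix x :: "nat \<Rightarrow> real"
  assume "\<exists>i\<in>{1..n}. x i \<noteq> 0"
  then obtain i where i: "i \<in> {1..n}" "x i \<noteq> 0" by blast
  show "\<exists>j\<in>{1..n}. x j \<noteq> 0 \<and> x j * tensor_apply T m n x j > 0"
  proof (rule ccontr)
    assume "\<not> ?thesis"
    then have "\<forall>j\<in>{1..n}. x j * tensor_apply T m n x j \<le> 0" by force
    then have "x i = 0" using Nekrasov_sign_nonpos_imp_zero assms(1,2,4,6) i(1) by blast
    with i(2) show False ..
  qed
qed

end
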